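(* Let $r\geq 3$. Then $Z_r$ is $(2,2)$-uniform if and only if $r\leq 4$; $Z_r\backslash y$ is $(2,2)$-uniform if and only if $r\leq 4$; and $Z_r\backslash t$ is $(2,2)$-uniform if and only if $r\leq 5$.
   Context: A matroid is $(2,2)$-uniform if it has no minor isomorphic to $U_{2,2}\oplus U_{0,2}$. For $r\ge3$, the rank-$r$ binary spike $Z_r$ is the vector matroid over $GF(2)$ of the $r\times(2r+1)$ matrix $[I_r\mid J_r-I_r\mid\mathbf 1]$, where $J_r$ is the all-ones $r\times r$ matrix; the last column (the all-ones vector) is the tip $t$, and $y$ denotes any non-tip element of $Z_r$. *)

theory Defs
  imports Main "HOL-Library.Z2"
begin

type_synonym 'a matroid = "'a set \<times> ('a set \<Rightarrow> bool)"

definition gr :: "'a matroid \<Rightarrow> 'a set" where "gr M = fst M"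
definition indep :: "'a matroid \<Rightarrow> 'a set \<Rightarrow> bool" where "indep M = snd M"

definition is_matroid :: "'a matroid \<Rightarrow> bool" where
  "is_matroid M \<longleftrightarrow> finite (gr M) \<and> indep M {} \<and>
     (\<forall>X. indep M X \<longrightarrow> X \<subseteq> gr M) \<and>
     (\<forall>X Y. indep M Y \<and> X \<subseteq> Y \<longrightarrow> indep M X) \<and>
     (\<forall>X Y. indep M X \<and> indep M Y \<and> card X < card Y \<longrightarrow>
        (\<exists>e\<in>Y - X. indep M (insert e X)))"

definition mdel :: "'a matroid \<Rightarrow> 'a set \<Rightarrow> 'a matroid" where
  "mdel M D = (gr M - D, \<lambda>X. indep M X \<and> X \<subseteq> gr M - D)"

definition mcontr :: "'a matroid \<Rightarrow> 'a set \<Rightarrow> 'a matroid" where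
  "mcontr M C = (gr M - C, \<lambda>X. X \<subseteq> gr M - C \<and>
     (\<exists>B. B \<subseteq> C \<and> indep M B \<and> (\<forall>B'. B \<subseteq> B' \<and> B' \<subseteq> C \<and> indep M B' \<longrightarrow> B' = B)
          \<and> indep M (X \<union> B)))"

definition is_minor :: "'a matroid \<Rightarrow> 'a matroid \<Rightarrow> bool" where
  "is_minor N M \<longleftrightarrow> (\<exists>C D. C \<subseteq> gr M \<and> D \<subseteq> gr M \<and> C \<inter> D = {} \<and>
                         N = mdel (mcontr M C) D)"

definition miso :: "'a matroid \<Rightarrow> 'b matroid \<Rightarrow> bool" where
  "miso M N \<longleftrightarrow> (\<exists>f. bij_betw f (gr M) (gr N) \<and>
                    (\<forall>X. X \<subseteq> gr M \<longrightarrow> (indep M X \<longleftrightarrow> indep N (f ` X))))"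

definition U22_U02 :: "nat matroid" where
  "U22_U02 = ({0,1,2,3}, \<lambda>X. X \<subseteq> {0,1})"

definition uniform22 :: "'a matroid \<Rightarrow> bool" where
  "uniform22 M \<longleftrightarrow> \<not> (\<exists>N. is_minor N M \<and> miso N U22_U02)"

text \<open>Columns of [I_r | J_r - I_r | 1] over GF(2), indexed j = 0..2r; rows i = 0..r-1.\<close>
definition spike_col :: "nat \<Rightarrow> nat \<Rightarrow> nat \<Rightarrow> bit" where
  "spike_col r j i = (if j < r then (if i = j then 1 else 0)
                      else if j < 2*r then (if i = j - r then 0 else 1)
                      else 1)"

definition gf2_indep :: "nat \<Rightarrow> (nat \<Rightarrow> nat \<Rightarrow> bit) \<Rightarrow> nat set \<Rightarrow> bool" where
  "gf2_indep r col X \<longleftrightarrow> (\<forall>c :: nat \<Rightarrow> bit.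
      (\<forall>i<r. (\<Sum>j\<in>X. c j * col j i) = 0) \<longrightarrow> (\<forall>j\<in>X. c j = 0))"

definition spike :: "nat \<Rightarrow> nat matroid" where
  "spike r = ({0..2*r}, \<lambda>X. X \<subseteq> {0..2*r} \<and> gf2_indep r (spike_col r) X)"

definition spike_tip :: "nat \<Rightarrow> nat" where "spike_tip r = 2*r"

end

theory Submission
  imports Defs
begin

text \<open>A matroid has a \<open>U\<^sub>2\<^sub>,\<^sub>2 \<oplus> U\<^sub>0\<^sub>,\<^sub>2\<close> minor iff it has an independent set \<open>B\<close> and
  elements \<open>a, b, c, d\<close> outside \<open>B\<close> with \<open>B \<union> {a, b}\<close> independent and \<open>c, d\<close> in the
  closure of \<open>B\<close>. In a simple binary matroid the vectors of \<open>B\<close>, \<open>c\<close> and \<open>d\<close> are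
  \<open>|B| + 2\<close> distinct nonzero vectors of the span of \<open>B\<close>, so \<open>|B| + 2 \<le> 2^|B| - 1\<close>, i.e.
  \<open>|B| \<ge> 3\<close>, while \<open>|B| + 2 \<le> r\<close>; hence \<open>r \<ge> 5\<close>. If moreover there are no triangles, as in
  \<open>Z\<^sub>r \ t\<close>, translating these vectors by the vector of \<open>c\<close> gives \<open>|B| + 2\<close> further nonzero
  vectors of the span, so \<open>|B| \<ge> 4\<close> and \<open>r \<ge> 6\<close>. Conversely, for \<open>r \<ge> 5\<close> two legs \<open>j, k\<close>
  together with the tip span the opposite legs \<open>r + j, r + k\<close>, and two further legs are
  independent of them; for \<open>r \<ge> 6\<close> the legs \<open>0, 1, 2\<close> and the column \<open>r\<close> span the
  columns \<open>r + 1, r + 2\<close> without the tip.\<close>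

section \<open>Vectors over GF(2) as sets of coordinates\<close>

declare add_bit_eq_xor [simp del] mult_bit_eq_and [simp del]

lemma sum_sym_diff_bit:
  fixes f :: "'a \<Rightarrow> bit"
  assumes "finite A" "finite B"
  shows "sum f (sym_diff A B) = sum f A + sum f B"
proof -
  have "sum f A + sum f B = sum f (A - B) + sum f (B - A) + 2 * sum f (A \<inter> B)"
    using assms by (simp add: sum.Int_Diff[of A f B] sum.Int_Diff[of B f A] Int_commute
        algebra_simps)
  also have "\<dots> = sum f (sym_diff A B)"
    using assms by (simp add: sum.union_disjoint Diff_Int_distrib2)
  finally show ?thesis ..
qed

lemma sum_mult_bit_filter:
  fixes c :: "'a \<Rightarrow> bit"
  assumes "finite X"
  shows "(\<Sum>j\<in>X. c j * f j) = (\<Sum>j\<in>{j\<in>X. c j = 1}. f j)"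
proof -
  have "(\<Sum>j\<in>X. c j * f j) = (\<Sum>j\<in>X. if c j = 1 then f j else 0)"
    by (rule sum.cong) auto
  then show ?thesis
    using assms by (simp add: sum.inter_filter)
qed

text \<open>A vector of \<open>GF(2)^r\<close> is encoded by its support, a subset of \<open>{..<r}\<close>; vector addition
  becomes symmetric difference.\<close>
definition col_sum :: "nat \<Rightarrow> (nat \<Rightarrow> nat \<Rightarrow> bit) \<Rightarrow> nat set \<Rightarrow> nat set" where
  "col_sum r col S = {i. i < r \<and> (\<Sum>j\<in>S. col j i) = 1}"

lemma col_sum_empty [simp]: "col_sum r col {} = {}"
  unfolding col_sum_def by simp

lemma col_sum_subset: "col_sum r col S \<subseteq> {..<r}"
  unfolding col_sum_def by auto

lemma col_sum_sym_diff:
  assumes "finite A" "finite B"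
  shows "col_sum r col (sym_diff A B) = sym_diff (col_sum r col A) (col_sum r col B)"
proof -
  have "(x + y = 1) \<longleftrightarrow> (x = 1) \<noteq> (y = 1)" for x y :: bit
    by (cases x; cases y) auto
  then show ?thesis
    unfolding col_sum_def sum_sym_diff_bit[OF assms] by auto
qed

lemma gf2_indep_iff_col_sum:
  assumes "finite X"
  shows "gf2_indep r col X \<longleftrightarrow> (\<forall>S\<subseteq>X. col_sum r col S = {} \<longrightarrow> S = {})"
proof
  assume indep: "gf2_indep r col X"
  show "\<forall>S\<subseteq>X. col_sum r col S = {} \<longrightarrow> S = {}"
  proof (intro allI impI)
    fix S assume S: "S \<subseteq> X" "col_sum r col S = {}"
    define c :: "nat \<Rightarrow> bit" where "c j = of_bool (j \<in> S)" for j
    have "{j\<in>X. c j = 1} = S"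
      using S(1) by (auto simp: c_def)
    then have "\<forall>i<r. (\<Sum>j\<in>X. c j * col j i) = 0"
      using S(2) unfolding sum_mult_bit_filter[OF assms] col_sum_def by auto
    then have "\<forall>j\<in>X. c j = 0"
      using indep by (simp add: gf2_indep_def)
    then show "S = {}"
      using S(1) by (auto simp: c_def)
  qed
next
  assume zero_free: "\<forall>S\<subseteq>X. col_sum r col S = {} \<longrightarrow> S = {}"
  show "gf2_indep r col X"
    unfolding gf2_indep_def
  proof (intro allI impI)
    fix c :: "nat \<Rightarrow> bit"
    assume "\<forall>i<r. (\<Sum>j\<in>X. c j * col j i) = 0"
    then have "col_sum r col {j\<in>X. c j = 1} = {}"
      unfolding sum_mult_bit_filter[OF assms] col_sum_def by auto
    then have "{j\<in>X. c j = 1} = {}"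
      using zero_free[rule_format, of "{j\<in>X. c j = 1}"] by blast
    then show "\<forall>j\<in>X. c j = 0"
      by auto
  qed
qed

lemma gf2_indep_subset:
  assumes "finite Y" "gf2_indep r col Y" "X \<subseteq> Y"
  shows "gf2_indep r col X"
  using assms finite_subset[OF assms(3,1)] by (auto simp: gf2_indep_iff_col_sum)

lemma gf2_dependentI:
  assumes "finite X" "S \<subseteq> X" "S \<noteq> {}" "col_sum r col S = {}"
  shows "\<not> gf2_indep r col X"
  using assms by (auto simp: gf2_indep_iff_col_sum)

lemma gf2_indep_insert:
  assumes "finite X" "gf2_indep r col X" "i < r" "col x i = 1" "\<forall>j\<in>X. col j i = 0"
  shows "gf2_indep r col (insert x X)"
  unfolding gf2_indep_iff_col_sum[OF finite.insertI[OF assms(1)]]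
proof (intro allI impI)
  fix S assume S: "S \<subseteq> insert x X" "col_sum r col S = {}"
  have "x \<notin> S"
  proof
    assume "x \<in> S"
    have "(\<Sum>j\<in>S. col j i) = col x i + (\<Sum>j\<in>S - {x}. col j i)"
      using \<open>x \<in> S\<close> S(1) assms(1) finite_subset by (subst sum.remove) auto
    also have "(\<Sum>j\<in>S - {x}. col j i) = 0"
      using S(1) assms(5) by (intro sum.neutral) auto
    finally have "i \<in> col_sum r col S"
      using assms(3,4) by (simp add: col_sum_def)
    then show False
      using S(2) by simp
  qed
  then show "S = {}"
    using S assms(1,2) by (auto simp: gf2_indep_iff_col_sum)
qed

lemma inj_on_col_sum_Pow:
  assumes "finite Y" "gf2_indep r col Y"
  shows "inj_on (col_sum r col) (Pow Y)"
proof (rule inj_onI)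
  fix S T assume "S \<in> Pow Y" "T \<in> Pow Y" "col_sum r col S = col_sum r col T"
  moreover have "finite S" "finite T"
    using \<open>S \<in> Pow Y\<close> \<open>T \<in> Pow Y\<close> assms(1) finite_subset by auto
  ultimately have "col_sum r col (sym_diff S T) = {}" "sym_diff S T \<subseteq> Y"
    by (auto simp: col_sum_sym_diff)
  then have "sym_diff S T = {}"
    using assms gf2_indep_iff_col_sum by blast
  then show "S = T"
    by blast
qed

lemma gf2_indep_card_le:
  assumes "finite Y" "gf2_indep r col Y"
  shows "card Y \<le> r"
proof -
  have "2 ^ card Y = card (col_sum r col ` Pow Y)"
    using assms by (simp add: card_image inj_on_col_sum_Pow card_Pow)
  also have "\<dots> \<le> card (Pow {..<r})"
    using col_sum_subset by (intro card_mono) auto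
  also have "\<dots> = 2 ^ r"
    by (simp add: card_Pow)
  finally show ?thesis
    by simp
qed

lemma col_sum_in_span:
  assumes "finite B" "gf2_indep r col B" "\<not> gf2_indep r col (insert x B)"
  shows "col_sum r col {x} \<in> col_sum r col ` Pow B"
proof -
  obtain S where S: "S \<subseteq> insert x B" "col_sum r col S = {}" "S \<noteq> {}"
    using assms(1,3) by (auto simp: gf2_indep_iff_col_sum)
  then have "x \<in> S"
    using assms(1,2) by (auto simp: gf2_indep_iff_col_sum)
  have "finite (S - {x})"
    using S(1) assms(1) finite_subset by auto
  moreover have "S = sym_diff {x} (S - {x})"
    using \<open>x \<in> S\<close> by auto
  ultimately have "col_sum r col {x} = col_sum r col (S - {x})"
    using S(2) col_sum_sym_diff[of "{x}" "S - {x}" r col] by auto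
  then show ?thesis
    using S(1) by blast
qed

lemma span_sym_diff_closed:
  assumes "finite B" "u \<in> col_sum r col ` Pow B" "w \<in> col_sum r col ` Pow B"
  shows "sym_diff u w \<in> col_sum r col ` Pow B"
proof -
  obtain S T where "S \<subseteq> B" "T \<subseteq> B" "u = col_sum r col S" "w = col_sum r col T"
    using assms(2,3) by auto
  moreover from this have "finite S" "finite T"
    using assms(1) finite_subset by auto
  ultimately show ?thesis
    by (auto simp: col_sum_sym_diff[symmetric] intro!: image_eqI[of _ _ "sym_diff S T"])
qed

lemma card_span_le: "finite B \<Longrightarrow> card (col_sum r col ` Pow B) \<le> 2 ^ card B"
  by (metis card_Pow card_image_le finite_Pow_iff)

text \<open>Translating \<open>U\<close> by one of its members gives a copy of \<open>U\<close> in \<open>W\<close> disjoint from \<open>U\<close>.\<close>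
lemma card_sum_free_le_half:
  assumes "finite W" "U \<subseteq> W - {{}}" "U \<noteq> {}"
    and closed: "\<And>u w. u \<in> W \<Longrightarrow> w \<in> W \<Longrightarrow> sym_diff u w \<in> W"
    and sum_free: "\<And>u w. u \<in> U \<Longrightarrow> w \<in> U \<Longrightarrow> u \<noteq> w \<Longrightarrow> sym_diff u w \<notin> U"
  shows "2 * card U \<le> card W"
proof -
  obtain u0 where "u0 \<in> U"
    using assms(3) by blast
  define T where "T = (\<lambda>u. sym_diff u u0) ` U"
  have "inj_on (\<lambda>u. sym_diff u u0) U"
    by (rule inj_onI) blast
  then have "card T = card U"
    by (simp add: T_def card_image)
  moreover have "T \<inter> U = {}"
    using sum_free \<open>u0 \<in> U\<close> assms(2) by (fastforce simp: T_def)
  moreover have "U \<union> T \<subseteq> W"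
    using assms(2) closed \<open>u0 \<in> U\<close> by (auto simp: T_def)
  ultimately have "card U + card U \<le> card W"
    using assms(1) card_mono[of W "U \<union> T"] card_Un_disjoint[of U T] finite_subset[of _ W]
    by (simp add: Int_commute)
  then show ?thesis
    by simp
qed

section \<open>Minors isomorphic to \<open>U\<^sub>2\<^sub>,\<^sub>2 \<oplus> U\<^sub>0\<^sub>,\<^sub>2\<close>\<close>

text \<open>In \<open>M / B\<close> restricted to \<open>{a, b, c, d}\<close>, the elements \<open>a, b\<close> are coloops and \<open>c, d\<close> are
  loops, i.e.\ this restriction is \<open>U\<^sub>2\<^sub>,\<^sub>2 \<oplus> U\<^sub>0\<^sub>,\<^sub>2\<close>.\<close>
definition U22_U02_config :: "'a matroid \<Rightarrow> 'a set \<Rightarrow> 'a \<Rightarrow> 'a \<Rightarrow> 'a \<Rightarrow> 'a \<Rightarrow> bool" where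
  "U22_U02_config M B a b c d \<longleftrightarrow> B \<subseteq> gr M \<and> {a, b, c, d} \<subseteq> gr M - B \<and> distinct [a, b, c, d]
     \<and> indep M B \<and> indep M (insert a (insert b B))
     \<and> \<not> indep M (insert c B) \<and> \<not> indep M (insert d B)"

lemma gr_U22_U02 [simp]: "gr U22_U02 = {0, 1, 2, 3}"
  unfolding U22_U02_def gr_def by simp

lemma indep_U22_U02 [simp]: "indep U22_U02 X \<longleftrightarrow> X \<subseteq> {0, 1}"
  unfolding U22_U02_def indep_def by simp

lemma gr_mdel [simp]: "gr (mdel M D) = gr M - D"
  unfolding mdel_def gr_def by simp

lemma indep_mdel [simp]: "indep (mdel M D) X \<longleftrightarrow> indep M X \<and> X \<subseteq> gr M - D"
  unfolding mdel_def indep_def by simp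

lemma gr_mcontr [simp]: "gr (mcontr M C) = gr M - C"
  unfolding mcontr_def gr_def by simp

lemma indep_mcontr:
  "indep (mcontr M C) X \<longleftrightarrow> X \<subseteq> gr M - C \<and>
     (\<exists>B. B \<subseteq> C \<and> indep M B \<and> (\<forall>B'. B \<subseteq> B' \<and> B' \<subseteq> C \<and> indep M B' \<longrightarrow> B' = B)
          \<and> indep M (X \<union> B))"
  unfolding mcontr_def indep_def gr_def by simp

lemma indep_mcontr_indep:
  assumes "indep M C"
  shows "indep (mcontr M C) X \<longleftrightarrow> X \<subseteq> gr M - C \<and> indep M (X \<union> C)"
proof -
  have "B = C" if "B \<subseteq> C" "\<forall>B'. B \<subseteq> B' \<and> B' \<subseteq> C \<and> indep M B' \<longrightarrow> B' = B" for B
    using that assms by blast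
  then show ?thesis
    using assms unfolding indep_mcontr by blast
qed

lemma miso_U22_U02E:
  assumes "miso N U22_U02"
  obtains a b c d where "gr N = {a, b, c, d}" "distinct [a, b, c, d]"
    "\<And>X. X \<subseteq> gr N \<Longrightarrow> indep N X \<longleftrightarrow> X \<subseteq> {a, b}"
proof -
  obtain f :: "_ \<Rightarrow> nat" where f: "bij_betw f (gr N) {0, 1, 2, 3}"
    and indep_f: "\<And>X. X \<subseteq> gr N \<Longrightarrow> indep N X \<longleftrightarrow> f ` X \<subseteq> {0, 1}"
    using assms unfolding miso_def by auto
  define g where "g = inv_into (gr N) f"
  have g: "bij_betw g {0, 1, 2, 3} (gr N)"
    unfolding g_def using f by (rule bij_betw_inv_into)
  have f_g: "f (g k) = k" if "k \<in> {0, 1, 2, 3}" for k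
    unfolding g_def using f that by (simp add: bij_betw_inv_into_right)
  have g_f: "g (f x) = x" if "x \<in> gr N" for x
    unfolding g_def using f that by (simp add: bij_betw_inv_into_left)
  have "gr N = {g 0, g 1, g 2, g 3}"
    using bij_betw_imp_surj_on[OF g] by auto
  moreover have "distinct [g 0, g 1, g 2, g 3]"
  proof -
    have "distinct (map g [0, 1, 2, 3])"
      using g by (simp add: distinct_map bij_betw_def)
    then show ?thesis
      by (simp only: list.map)
  qed
  moreover have "indep N X \<longleftrightarrow> X \<subseteq> {g 0, g 1}" if "X \<subseteq> gr N" for X
  proof -
    have "f ` X \<subseteq> {0, 1} \<longleftrightarrow> X \<subseteq> {g 0, g 1}"
    proof
      assume "f ` X \<subseteq> {0, 1}"
      then have "x \<in> g ` {0, 1}" if "x \<in> X" for x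
        using that g_f \<open>X \<subseteq> gr N\<close> by (metis image_eqI subsetD)
      then show "X \<subseteq> {g 0, g 1}"
        by auto
    qed (use f_g in auto)
    then show ?thesis
      using indep_f[OF that] by simp
  qed
  ultimately show thesis
    by (rule that)
qed

lemma miso_U22_U02I:
  assumes "gr N = {a, b, c, d}" "distinct [a, b, c, d]"
    and indep_N: "\<And>X. X \<subseteq> gr N \<Longrightarrow> indep N X \<longleftrightarrow> X \<subseteq> {a, b}"
  shows "miso N U22_U02"
proof -
  define f :: "_ \<Rightarrow> nat" where
    "f x = (if x = a then 0 else if x = b then 1 else if x = c then 2 else 3)" for x
  have f_abcd: "f a = 0" "f b = 1" "f c = 2" "f d = 3"
    using assms(2) by (auto simp: f_def)
  have "bij_betw f (gr N) {0, 1, 2, 3}"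
    using assms(1,2) by (auto simp: bij_betw_def inj_on_def f_def)
  moreover have "indep N X \<longleftrightarrow> f ` X \<subseteq> {0, 1}" if "X \<subseteq> gr N" for X
  proof -
    have "f ` X \<subseteq> {0, 1} \<longleftrightarrow> c \<notin> X \<and> d \<notin> X"
      using that assms(1) f_abcd by (auto simp: image_subset_iff)
    also have "\<dots> \<longleftrightarrow> X \<subseteq> {a, b}"
      using that assms(1,2) by auto
    finally show ?thesis
      using indep_N[OF that] by simp
  qed
  ultimately show ?thesis
    unfolding miso_def by (intro exI[of _ f]) simp
qed

lemma minor_U22_U02_imp_config:
  assumes "is_minor N M" "miso N U22_U02"
  shows "\<exists>B a b c d. U22_U02_config M B a b c d"
proof -
  obtain C D where C: "C \<subseteq> gr M" and N: "N = mdel (mcontr M C) D"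
    using assms(1) unfolding is_minor_def by blast
  obtain a b c d where abcd: "gr N = {a, b, c, d}" "distinct [a, b, c, d]"
    and indep_N: "\<And>X. X \<subseteq> gr N \<Longrightarrow> indep N X \<longleftrightarrow> X \<subseteq> {a, b}"
    using miso_U22_U02E[OF assms(2)] by metis
  have "indep N {a, b}"
    using indep_N abcd(1) by simp
  then have "indep (mcontr M C) {a, b}"
    using N by simp
  then obtain B where B: "B \<subseteq> C" "indep M B"
    "\<forall>B'. B \<subseteq> B' \<and> B' \<subseteq> C \<and> indep M B' \<longrightarrow> B' = B" "indep M ({a, b} \<union> B)"
    unfolding indep_mcontr by blast
  have "\<not> indep M ({x} \<union> B)" if "x \<in> {c, d}" for x
  proof -
    have "{x} \<subseteq> gr N"
      using that abcd(1) by auto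
    moreover have "\<not> indep N {x}"
      using that indep_N[OF \<open>{x} \<subseteq> gr N\<close>] abcd(2) by auto
    ultimately have "\<not> indep (mcontr M C) {x}"
      using N by simp
    moreover have "{x} \<subseteq> gr M - C"
      using \<open>{x} \<subseteq> gr N\<close> N by simp
    ultimately show ?thesis
      using B(1-3) unfolding indep_mcontr by blast
  qed
  moreover have "{a, b, c, d} \<subseteq> gr M - B"
    using abcd(1) N B(1) by auto
  ultimately have "U22_U02_config M B a b c d"
    unfolding U22_U02_config_def using B C abcd(2) by auto
  then show ?thesis
    by blast
qed

lemma config_imp_minor_U22_U02:
  assumes hereditary: "\<And>X Y. indep M Y \<Longrightarrow> X \<subseteq> Y \<Longrightarrow> indep M X"
    and config: "U22_U02_config M B a b c d"
  shows "\<exists>N. is_minor N M \<and> miso N U22_U02"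
proof -
  have B: "B \<subseteq> gr M" "{a, b, c, d} \<subseteq> gr M - B" "distinct [a, b, c, d]" "indep M B"
    and ab: "indep M (insert a (insert b B))"
    and cd: "\<not> indep M (insert c B)" "\<not> indep M (insert d B)"
    using config unfolding U22_U02_config_def by blast+
  define N where "N = mdel (mcontr M B) (gr M - B - {a, b, c, d})"
  have "is_minor N M"
    unfolding is_minor_def N_def using B(1)
    by (intro exI[of _ B] exI[of _ "gr M - B - {a, b, c, d}"]) auto
  moreover have "gr N = {a, b, c, d}"
    using B(2) by (auto simp: N_def)
  moreover have "indep N X \<longleftrightarrow> X \<subseteq> {a, b}" if "X \<subseteq> {a, b, c, d}" for X
  proof -
    have "indep N X \<longleftrightarrow> indep M (X \<union> B)"
      using that B(2,4) by (auto simp: N_def indep_mcontr_indep)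
    also have "\<dots> \<longleftrightarrow> X \<subseteq> {a, b}"
    proof
      assume "indep M (X \<union> B)"
      then have "c \<notin> X" "d \<notin> X"
        using cd hereditary[of "X \<union> B"] by blast+
      then show "X \<subseteq> {a, b}"
        using that by blast
    next
      assume "X \<subseteq> {a, b}"
      then show "indep M (X \<union> B)"
        using ab hereditary[of "insert a (insert b B)" "X \<union> B"] by blast
    qed
    finally show ?thesis .
  qed
  ultimately have "miso N U22_U02"
    using B(3) by (intro miso_U22_U02I) auto
  with \<open>is_minor N M\<close> show ?thesis
    by blast
qed

lemma uniform22_iff_no_config:
  assumes "\<And>X Y. indep M Y \<Longrightarrow> X \<subseteq> Y \<Longrightarrow> indep M X"
  shows "uniform22 M \<longleftrightarrow> \<not> (\<exists>B a b c d. U22_U02_config M B a b c d)"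
proof -
  have "\<exists>N. is_minor N M \<and> miso N U22_U02" if "U22_U02_config M B a b c d" for B a b c d
    using assms that by (rule config_imp_minor_U22_U02)
  then show ?thesis
    unfolding uniform22_def using minor_U22_U02_imp_config by blast
qed

section \<open>Binary vector matroids\<close>

definition vec_matroid :: "nat \<Rightarrow> (nat \<Rightarrow> nat \<Rightarrow> bit) \<Rightarrow> nat set \<Rightarrow> nat matroid" where
  "vec_matroid r col E = (E, \<lambda>X. X \<subseteq> E \<and> gf2_indep r col X)"

lemma gr_vec_matroid [simp]: "gr (vec_matroid r col E) = E"
  unfolding vec_matroid_def gr_def by simp

lemma indep_vec_matroid [simp]:
  "indep (vec_matroid r col E) X \<longleftrightarrow> X \<subseteq> E \<and> gf2_indep r col X"
  unfolding vec_matroid_def indep_def by simp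

lemma mdel_vec_matroid: "mdel (vec_matroid r col E) D = vec_matroid r col (E - D)"
  unfolding mdel_def vec_matroid_def gr_def indep_def by auto

lemma uniform22_vec_matroid_iff:
  assumes "finite E"
  shows "uniform22 (vec_matroid r col E) \<longleftrightarrow>
    \<not> (\<exists>B a b c d. U22_U02_config (vec_matroid r col E) B a b c d)"
proof (rule uniform22_iff_no_config)
  fix X Y assume "indep (vec_matroid r col E) Y" "X \<subseteq> Y"
  moreover from this have "finite Y"
    using assms finite_subset by auto
  ultimately show "indep (vec_matroid r col E) X"
    using gf2_indep_subset by auto
qed

lemma not_uniform22_vec_matroid:
  "finite E \<Longrightarrow> U22_U02_config (vec_matroid r col E) B a b c d \<Longrightarrow> \<not> uniform22 (vec_matroid r col E)"
  using uniform22_vec_matroid_iff by blast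

definition triangle_free :: "nat \<Rightarrow> (nat \<Rightarrow> nat \<Rightarrow> bit) \<Rightarrow> nat set \<Rightarrow> bool" where
  "triangle_free r col E \<longleftrightarrow> (\<forall>x\<in>E. \<forall>y\<in>E. \<forall>z\<in>E. x \<noteq> y \<longrightarrow>
     sym_diff (col_sum r col {x}) (col_sum r col {y}) \<noteq> col_sum r col {z})"

lemma triangle_free_imp_sum_free:
  assumes "triangle_free r col E" "X \<subseteq> E"
    and "u \<in> (\<lambda>x. col_sum r col {x}) ` X" "w \<in> (\<lambda>x. col_sum r col {x}) ` X" "u \<noteq> w"
  shows "sym_diff u w \<notin> (\<lambda>x. col_sum r col {x}) ` X"
proof
  assume "sym_diff u w \<in> (\<lambda>x. col_sum r col {x}) ` X"
  then obtain z where z: "sym_diff u w = col_sum r col {z}" "z \<in> X"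
    by (rule imageE)
  obtain x where x: "u = col_sum r col {x}" "x \<in> X"
    using assms(3) by (rule imageE)
  obtain y where y: "w = col_sum r col {y}" "y \<in> X"
    using assms(4) by (rule imageE)
  have "x \<in> E" "y \<in> E" "z \<in> E" "x \<noteq> y"
    using x y z(2) assms(2,5) by auto
  then show False
    using assms(1) x(1) y(1) z(1) unfolding triangle_free_def by blast
qed

text \<open>The span of \<open>B\<close> has at most \<open>2 ^ card B\<close> vectors and contains the distinct nonzero
  vectors of \<open>B\<close>, \<open>c\<close> and \<open>d\<close>; if there are no triangles, it also contains their translates by
  the vector of \<open>c\<close>.\<close>
lemma U22_U02_config_vec_matroid_card:
  assumes "finite E"
    and inj: "inj_on (\<lambda>x. col_sum r col {x}) E"
    and nonzero: "\<forall>x\<in>E. col_sum r col {x} \<noteq> {}"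
    and config: "U22_U02_config (vec_matroid r col E) B a b c d"
  shows "card B + 2 \<le> r" "card B + 3 \<le> 2 ^ card B"
    and "triangle_free r col E \<Longrightarrow> 2 * card B + 4 \<le> 2 ^ card B"
proof -
  have B: "B \<subseteq> E" "{a, b, c, d} \<subseteq> E - B" "distinct [a, b, c, d]" "gf2_indep r col B"
    and ab: "gf2_indep r col (insert a (insert b B))"
    and cd: "\<not> gf2_indep r col (insert c B)" "\<not> gf2_indep r col (insert d B)"
    using config unfolding U22_U02_config_def by auto
  have "finite B"
    using B(1) assms(1) finite_subset by blast
  have "card (insert a (insert b B)) \<le> r"
    using ab \<open>finite B\<close> by (intro gf2_indep_card_le) auto
  then show "card B + 2 \<le> r"
    using B(2,3) \<open>finite B\<close> by simp
  define W where "W = col_sum r col ` Pow B"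
  define U where "U = (\<lambda>x. col_sum r col {x}) ` insert c (insert d B)"
  have "card W \<le> 2 ^ card B"
    unfolding W_def using \<open>finite B\<close> by (rule card_span_le)
  have "finite W" "{} \<in> W"
    unfolding W_def using \<open>finite B\<close> col_sum_empty by blast+
  have "U \<subseteq> W - {{}}"
  proof -
    have "col_sum r col {x} \<in> W" if "x \<in> B" for x
      using that unfolding W_def by blast
    moreover have "col_sum r col {x} \<in> W" if "x \<in> {c, d}" for x
      using that cd \<open>finite B\<close> B(4) unfolding W_def by (auto intro: col_sum_in_span)
    ultimately show ?thesis
      unfolding U_def using nonzero B(1,2) by auto
  qed
  have "card U = card B + 2"
  proof -
    have "card U = card (insert c (insert d B))"
      unfolding U_def using B(1,2) by (intro card_image inj_on_subset[OF inj]) auto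
    then show ?thesis
      using B(2,3) \<open>finite B\<close> by simp
  qed
  have "card U \<le> card W - 1"
    using \<open>U \<subseteq> W - {{}}\<close> \<open>finite W\<close> \<open>{} \<in> W\<close> card_mono[of "W - {{}}" U] by simp
  then show "card B + 3 \<le> 2 ^ card B"
    using \<open>card U = card B + 2\<close> \<open>card W \<le> 2 ^ card B\<close> by linarith
  assume "triangle_free r col E"
  have "2 * card U \<le> card W"
  proof (rule card_sum_free_le_half)
    show "sym_diff u w \<in> W" if "u \<in> W" "w \<in> W" for u w
      using \<open>finite B\<close> that unfolding W_def by (rule span_sym_diff_closed)
    show "sym_diff u w \<notin> U" if "u \<in> U" "w \<in> U" "u \<noteq> w" for u w
      using \<open>triangle_free r col E\<close> B(1,2) that unfolding U_def
      by (intro triangle_free_imp_sum_free) auto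
  qed (use \<open>finite W\<close> \<open>U \<subseteq> W - {{}}\<close> U_def in auto)
  then show "2 * card B + 4 \<le> 2 ^ card B"
    using \<open>card U = card B + 2\<close> \<open>card W \<le> 2 ^ card B\<close> by simp
qed

lemma uniform22_vec_matroid:
  assumes "finite E"
    and "inj_on (\<lambda>x. col_sum r col {x}) E" "\<forall>x\<in>E. col_sum r col {x} \<noteq> {}"
    and "r \<le> 4 \<or> r = 5 \<and> triangle_free r col E"
  shows "uniform22 (vec_matroid r col E)"
  unfolding uniform22_vec_matroid_iff[OF assms(1)]
proof
  assume "\<exists>B a b c d. U22_U02_config (vec_matroid r col E) B a b c d"
  then obtain B a b c d where "U22_U02_config (vec_matroid r col E) B a b c d"
    by blast
  note card_B = U22_U02_config_vec_matroid_card[OF assms(1-3) this]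
  consider "r \<le> 4" | "r = 5" "triangle_free r col E"
    using assms(4) by blast
  then show False
  proof cases
    case 1
    then have "card B \<in> {0, 1, 2}"
      using card_B(1) by auto
    then show False
      using card_B(2) by auto
  next
    case 2
    then have "card B \<in> {0, 1, 2, 3}"
      using card_B(1) by auto
    then show False
      using card_B(3)[OF 2(2)] by auto
  qed
qed

section \<open>The binary spike\<close>

lemma spike_eq_vec_matroid: "spike r = vec_matroid r (spike_col r) {0..2 * r}"
  unfolding spike_def vec_matroid_def by simp

definition spike_supp :: "nat \<Rightarrow> nat \<Rightarrow> nat set" where
  "spike_supp r x = (if x < r then {x} else if x < 2 * r then {..<r} - {x - r} else {..<r})"

lemma col_sum_spike_col: "col_sum r (spike_col r) {x} = spike_supp r x"
  unfolding col_sum_def spike_supp_def spike_col_def by auto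

lemma card_spike_supp:
  "card (spike_supp r x) = (if x < r then 1 else if x < 2 * r then r - 1 else r)"
  by (simp add: spike_supp_def)

lemma spike_supp_nonempty: "2 \<le> r \<Longrightarrow> spike_supp r x \<noteq> {}"
proof -
  assume "2 \<le> r"
  then have "card (spike_supp r x) \<noteq> 0"
    by (simp add: card_spike_supp)
  then show ?thesis
    by auto
qed

lemma inj_on_spike_supp:
  assumes "3 \<le> r"
  shows "inj_on (spike_supp r) {0..2 * r}"
proof (rule inj_onI)
  fix x y assume x: "x \<in> {0..2 * r}" and y: "y \<in> {0..2 * r}" and eq: "spike_supp r x = spike_supp r y"
  then have "card (spike_supp r x) = card (spike_supp r y)"
    by simp
  then have "x < r \<longleftrightarrow> y < r" "x < 2 * r \<longleftrightarrow> y < 2 * r"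
    using assms unfolding card_spike_supp by (auto split: if_splits)
  moreover have "x - r \<notin> spike_supp r x" if "r \<le> x" "x < 2 * r"
    using that by (simp add: spike_supp_def)
  ultimately show "x = y"
    using x y eq by (auto simp: spike_supp_def split: if_splits)
qed

lemma card_sym_diff_spike_supp:
  assumes "x < 2 * r" "y < 2 * r" "x \<noteq> y"
  shows "card (sym_diff (spike_supp r x) (spike_supp r y)) \<in> {2, r - 2, r}"
proof -
  have leg: "card (sym_diff (spike_supp r x) (spike_supp r y)) \<in> {2, r - 2, r}"
    if "x < r" "y < 2 * r" "x \<noteq> y" for x y
  proof (cases "y < r")
    case True
    then have "sym_diff (spike_supp r x) (spike_supp r y) = {x, y}"
      using that by (auto simp: spike_supp_def)
    then show ?thesis
      using that by simp
  next
    case False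
    then have "sym_diff (spike_supp r x) (spike_supp r y) =
      (if x = y - r then {..<r} else {..<r} - {x, y - r})"
      using that by (auto simp: spike_supp_def)
    then show ?thesis
      using that False by (simp add: card_Diff_subset numeral_2_eq_2)
  qed
  consider "x < r" | "y < r" | "r \<le> x" "r \<le> y"
    by linarith
  then show ?thesis
  proof cases
    case 1
    then show ?thesis
      using leg assms by blast
  next
    case 2
    moreover have "sym_diff (spike_supp r x) (spike_supp r y) = sym_diff (spike_supp r y) (spike_supp r x)"
      by blast
    ultimately show ?thesis
      using leg[of y x] assms by simp
  next
    case 3
    then have "sym_diff (spike_supp r x) (spike_supp r y) = {x - r, y - r}"
      using assms by (auto simp: spike_supp_def)
    then show ?thesis
      using 3 assms by simp
  qed
qed

text \<open>Non-tip columns have weight \<open>1\<close> or \<open>r - 1\<close>, sums of two of them weight \<open>2\<close>, \<open>r - 2\<close> or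
  \<open>r\<close>.\<close>
lemma triangle_free_spike_del_tip:
  assumes "4 \<le> r" "E \<subseteq> {..<2 * r}"
  shows "triangle_free r (spike_col r) E"
  unfolding triangle_free_def col_sum_spike_col
proof (intro ballI impI)
  fix x y z assume "x \<in> E" "y \<in> E" "z \<in> E" "x \<noteq> y"
  then have "card (sym_diff (spike_supp r x) (spike_supp r y)) \<in> {2, r - 2, r}"
    "card (spike_supp r z) \<in> {1, r - 1}"
    using assms(2) card_sym_diff_spike_supp[of x r y] by (auto simp: card_spike_supp)
  then show "sym_diff (spike_supp r x) (spike_supp r y) \<noteq> spike_supp r z"
    using assms(1) by auto
qed

lemma gf2_indep_spike_legs:
  assumes "S \<subseteq> {..<r}"
  shows "gf2_indep r (spike_col r) S"
proof -
  have "finite S"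
    using assms finite_subset by blast
  then show ?thesis
    using assms
  proof (induction S rule: finite_induct)
    case empty
    then show ?case
      by (simp add: gf2_indep_def)
  next
    case (insert x S)
    then show ?case
      by (intro gf2_indep_insert[where i = x]) (auto simp: spike_col_def)
  qed
qed

lemma gf2_indep_spike_legs_insert:
  assumes "S \<subseteq> {..<r}" "i < r" "i \<notin> S" "spike_col r x i = 1"
  shows "gf2_indep r (spike_col r) (insert x S)"
  using assms finite_subset[OF assms(1)]
  by (intro gf2_indep_insert gf2_indep_spike_legs) (auto simp: spike_col_def)

lemma col_sum_spike_triangle: "j < r \<Longrightarrow> col_sum r (spike_col r) {j, r + j, 2 * r} = {}"
  by (auto simp: col_sum_def spike_col_def)

lemma col_sum_spike_square:
  "p < r \<Longrightarrow> q < r \<Longrightarrow> p \<noteq> q \<Longrightarrow> col_sum r (spike_col r) {p, q, r + p, r + q} = {}"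
  by (auto simp: col_sum_def spike_col_def)

lemma U22_U02_config_spike:
  assumes "5 \<le> r" "{j, k, l, m} \<subseteq> {..<r}" "distinct [j, k, l, m]"
    and "{j, k, l, m, r + j, r + k, 2 * r} \<subseteq> E"
  shows "U22_U02_config (vec_matroid r (spike_col r) E) {j, k, 2 * r} l m (r + j) (r + k)"
proof -
  have "\<not> {..<r} \<subseteq> {l, m, j, k}"
  proof
    assume "{..<r} \<subseteq> {l, m, j, k}"
    then have "card {..<r} \<le> card (set [l, m, j, k])"
      by (intro card_mono) auto
    also have "\<dots> \<le> 4"
      using card_length[of "[l, m, j, k]"] by simp
    finally show False
      using assms(1) by simp
  qed
  then obtain i where "i < r" "i \<notin> {l, m, j, k}"
    by blast
  then have indep: "gf2_indep r (spike_col r) (insert (2 * r) {l, m, j, k})"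
    using assms(2) by (intro gf2_indep_spike_legs_insert) (auto simp: spike_col_def)
  then have "gf2_indep r (spike_col r) {j, k, 2 * r}"
    by (rule gf2_indep_subset[rotated]) auto
  moreover have "gf2_indep r (spike_col r) (insert l (insert m {j, k, 2 * r}))"
    using indep by (simp add: insert_commute)
  moreover have dep: "\<not> gf2_indep r (spike_col r) (insert (r + x) {j, k, 2 * r})" if "x \<in> {j, k}" for x
    using that assms(2)
    by (intro gf2_dependentI[of _ "{x, r + x, 2 * r}"] col_sum_spike_triangle) auto
  ultimately show ?thesis
    using assms dep[of j] dep[of k] unfolding U22_U02_config_def by auto
qed

lemma U22_U02_config_spike_del_tip:
  assumes "6 \<le> r" "{0, 1, 2, 3, 4, r, r + 1, r + 2} \<subseteq> E"
  shows "U22_U02_config (vec_matroid r (spike_col r) E) {0, 1, 2, r} 3 4 (r + 1) (r + 2)"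
proof -
  have indep: "gf2_indep r (spike_col r) (insert r {0, 1, 2, 3, 4})"
    using assms(1) by (intro gf2_indep_spike_legs_insert[where i = 5]) (auto simp: spike_col_def)
  then have "gf2_indep r (spike_col r) {0, 1, 2, r}"
    by (rule gf2_indep_subset[rotated]) auto
  moreover have "gf2_indep r (spike_col r) (insert 3 (insert 4 {0, 1, 2, r}))"
    using indep by (simp add: insert_commute)
  moreover have dep: "\<not> gf2_indep r (spike_col r) (insert (r + q) {0, 1, 2, r})" if "q \<in> {1, 2}" for q
    using that assms(1)
    by (intro gf2_dependentI[of _ "{0, q, r + 0, r + q}"] col_sum_spike_square) auto
  ultimately show ?thesis
    using assms dep[of 1] dep[of 2] unfolding U22_U02_config_def by auto
qed

lemma uniform22_spike_restriction:
  assumes "3 \<le> r" "E \<subseteq> {0..2 * r}" "r \<le> 4 \<or> r = 5 \<and> 2 * r \<notin> E"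
  shows "uniform22 (vec_matroid r (spike_col r) E)"
proof (rule uniform22_vec_matroid)
  show "finite E"
    using assms(2) finite_subset by blast
  show "inj_on (\<lambda>x. col_sum r (spike_col r) {x}) E"
    unfolding col_sum_spike_col using inj_on_spike_supp[OF assms(1)] assms(2) by (rule inj_on_subset)
  show "\<forall>x\<in>E. col_sum r (spike_col r) {x} \<noteq> {}"
    using assms(1) by (simp add: col_sum_spike_col spike_supp_nonempty)
  show "r \<le> 4 \<or> r = 5 \<and> triangle_free r (spike_col r) E"
  proof (cases "r \<le> 4")
    case False
    then have "r = 5" "2 * r \<notin> E"
      using assms(3) by auto
    moreover have "x < 2 * r" if "x \<in> E" for x
      using that assms(2) \<open>2 * r \<notin> E\<close> by (metis atLeastAtMost_iff le_neq_implies_less subsetD)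
    ultimately show ?thesis
      using triangle_free_spike_del_tip[of r E] by auto
  qed simp
qed

text \<open>The legs \<open>0, 1, 2, 3\<close> with the index of \<open>y\<close> replaced by \<open>4\<close> avoid \<open>y\<close>.\<close>
lemma not_uniform22_spike_del:
  assumes "5 \<le> r" "y < 2 * r" "{0..2 * r} - {y} \<subseteq> E" "E \<subseteq> {0..2 * r}"
  shows "\<not> uniform22 (vec_matroid r (spike_col r) E)"
proof -
  define f where "f n = (if n = y mod r then 4 else n)" for n :: nat
  have f: "f n < 5" "f n \<noteq> y mod r" if "n < 4" for n
    using that by (auto simp: f_def)
  have "y = y mod r \<or> y = r + y mod r"
    using assms(2) by (cases "y < r") (auto simp: le_mod_geq)
  then have "{f 0, f 1, f 2, f 3, r + f 0, r + f 1, 2 * r} \<subseteq> E"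
    using assms f[of 0] f[of 1] f[of 2] f[of 3] by auto
  moreover have "distinct [f 0, f 1, f 2, f 3]"
    by (simp add: f_def)
  ultimately have "U22_U02_config (vec_matroid r (spike_col r) E)
      {f 0, f 1, 2 * r} (f 2) (f 3) (r + f 0) (r + f 1)"
    using assms(1) f[of 0] f[of 1] f[of 2] f[of 3] by (intro U22_U02_config_spike) auto
  moreover have "finite E"
    using assms(4) finite_subset by blast
  ultimately show ?thesis
    using not_uniform22_vec_matroid by blast
qed

lemma not_uniform22_spike_del_tip:
  assumes "6 \<le> r"
  shows "\<not> uniform22 (vec_matroid r (spike_col r) ({0..2 * r} - {2 * r}))"
  by (rule not_uniform22_vec_matroid[OF _ U22_U02_config_spike_del_tip]) (use assms in auto)

theorem lemma4p2:
  fixes r :: nat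
  assumes "r \<ge> 3"
  shows "(uniform22 (spike r) \<longleftrightarrow> r \<le> 4)
    \<and> (\<forall>y \<in> gr (spike r) - {spike_tip r}. uniform22 (mdel (spike r) {y}) \<longleftrightarrow> r \<le> 4)
    \<and> (uniform22 (mdel (spike r) {spike_tip r}) \<longleftrightarrow> r \<le> 5)"
  unfolding spike_eq_vec_matroid mdel_vec_matroid spike_tip_def gr_vec_matroid
proof (intro conjI ballI)
  show "uniform22 (vec_matroid r (spike_col r) {0..2 * r}) \<longleftrightarrow> r \<le> 4"
    using assms uniform22_spike_restriction[of r "{0..2 * r}"] not_uniform22_spike_del[of r 0]
    by (cases "r \<le> 4") auto
next
  fix y assume "y \<in> {0..2 * r} - {2 * r}"
  then show "uniform22 (vec_matroid r (spike_col r) ({0..2 * r} - {y})) \<longleftrightarrow> r \<le> 4"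
    using assms uniform22_spike_restriction[of r "{0..2 * r} - {y}"] not_uniform22_spike_del[of r y]
    by (cases "r \<le> 4") auto
next
  show "uniform22 (vec_matroid r (spike_col r) ({0..2 * r} - {2 * r})) \<longleftrightarrow> r \<le> 5"
    using assms uniform22_spike_restriction[of r "{0..2 * r} - {2 * r}"] not_uniform22_spike_del_tip
    by (cases "r \<le> 4"; cases "r = 5") auto
qed

end
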